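(* Let $p_n\in(0,1)$ with $p_n\to1$, let $\tilde K=\tilde K_n=\frac{2\ln n}{1-p_n}$, and let $r_n>0$ satisfy $r_n=o(\tilde K^2)$. Then there are positive sequences $\delta_n\to0$ and $\varepsilon_n\to0$ with $\delta_n\tilde K\to\infty$ such that for any sequence of non-random graphs $R_n$ with $V(R_n)=[n]$ and $e(R_n)\le r_n$, the number $X_n$ of cliques of size $\lfloor\tilde K(1+\delta_n)\rfloor$ in $G(n,p_n)\vee R_n$ satisfies $\mathbb E\,X_n\le\varepsilon_n$.
   Context: $G(n,p)$ is the Erdős–Rényi random graph on $[n]$ with each edge present independently with probability $p$. For graphs $G,R$ on the same vertex set, $G\vee R$ is the graph on that vertex set with edge set $E(G)\cup E(R)$. $e(R)$ is the number of edges of $R$. *)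

theory Defs
  imports "HOL-Probability.Probability" "HOL-Library.Landau_Symbols"
begin

text \<open>Simple graphs on the vertex set [n] = {1..n} are represented by their edge sets,
  i.e. sets of 2-element subsets of {1..n}.\<close>

definition all_edges :: "nat \<Rightarrow> nat set set" where
  "all_edges n = {e. e \<subseteq> {1..n} \<and> card e = 2}"

definition gnp :: "nat \<Rightarrow> real \<Rightarrow> nat set set pmf" where
  "gnp n p = map_pmf (\<lambda>f. {e \<in> all_edges n. f e})
                (Pi_pmf (all_edges n) False (\<lambda>_. bernoulli_pmf p))"

definition graph_join :: "nat set set \<Rightarrow> nat set set \<Rightarrow> nat set set" where
  "graph_join G R = G \<union> R"

definition is_clique :: "nat set set \<Rightarrow> nat set \<Rightarrow> bool" where
  "is_clique E S \<longleftrightarrow> (\<forall>u\<in>S. \<forall>v\<in>S. u \<noteq> v \<longrightarrow> {u, v} \<in> E)"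

definition num_cliques :: "nat \<Rightarrow> nat set set \<Rightarrow> nat \<Rightarrow> nat" where
  "num_cliques n E k = card {S. S \<subseteq> {1..n} \<and> card S = k \<and> is_clique E S}"

end

theory Submission
  imports Defs "HOL-Real_Asymp.Real_Asymp"
begin

text \<open>A \<open>k\<close>-set \<open>S\<close> spans a clique of \<open>G \<or> R\<close> only if \<open>G\<close> contains all edges of \<open>S\<close> outside \<open>R\<close>,
  so the union bound gives \<open>E X \<le> (n choose k) p^((k choose 2) - e(R))\<close>. With \<open>q = 1 - p\<close>, \<open>L = ln n\<close>
  and \<open>-ln p \<le> 2q\<close> for \<open>p \<ge> 1/2\<close>, the logarithm of this bound is at most
  \<open>k (L - q (k - 1) / 2) + 2 q e(R)\<close>. For \<open>k \<approx> K (1 + \<delta>)\<close> and \<open>q K = 2 L\<close> the first term is at most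
  \<open>-K L \<delta> / 2\<close>, and \<open>e(R) \<le> \<delta> K\<^sup>2 / 16\<close> keeps the second below \<open>K L \<delta> / 4\<close>. Since \<open>e(R) = o(K\<^sup>2)\<close>,
  \<open>\<delta> = sqrt (e(R) / K\<^sup>2) + 1 / sqrt (ln n)\<close> satisfies this eventually while \<open>\<delta> \<longrightarrow> 0\<close> and
  \<open>\<delta> L \<longrightarrow> \<infinity>\<close>, so the bound tends to \<open>0\<close>.\<close>

lemma finite_all_edges: "finite (all_edges n)"
  unfolding all_edges_def by (rule finite_subset[of _ "Pow {1..n}"]) auto

lemma prob_gnp_superset:
  assumes F: "F \<subseteq> all_edges n" and p: "0 \<le> p" "p \<le> 1"
  shows "measure_pmf.prob (gnp n p) {G. F \<subseteq> G} = p ^ card F"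
proof -
  define B where "B e = (if e \<in> F then {True} else UNIV)" for e
  have preimage: "(\<lambda>f. {e \<in> all_edges n. f e}) -` {G. F \<subseteq> G} = Pi (all_edges n) B"
    using F by (auto simp: B_def Pi_def)
  have "measure_pmf.prob (gnp n p) {G. F \<subseteq> G}
      = measure_pmf.prob (Pi_pmf (all_edges n) False (\<lambda>_. bernoulli_pmf p)) (Pi (all_edges n) B)"
    unfolding gnp_def measure_map_pmf preimage ..
  also have "\<dots> = (\<Prod>e\<in>all_edges n. measure_pmf.prob (bernoulli_pmf p) (B e))"
    by (rule measure_Pi_pmf_Pi[OF finite_all_edges])
  also have "\<dots> = (\<Prod>e\<in>all_edges n. if e \<in> F then p else 1)"
    by (intro prod.cong refl) (auto simp: B_def measure_pmf_single p)
  also have "\<dots> = p ^ card F"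
    using F finite_all_edges by (simp add: prod.If_cases Int_absorb1)
  finally show ?thesis .
qed

lemma is_clique_edges_subset:
  assumes "is_clique H S"
  shows "{e. e \<subseteq> S \<and> card e = 2} \<subseteq> H"
  using assms unfolding is_clique_def by (auto simp: card_2_iff)

lemma expectation_num_cliques:
  fixes M :: "'a pmf" and H :: "'a \<Rightarrow> nat set set"
  shows "measure_pmf.expectation M (\<lambda>x. real (num_cliques n (H x) k))
       = (\<Sum>S | S \<subseteq> {1..n} \<and> card S = k. measure_pmf.prob M {x. is_clique (H x) S})"
proof -
  let ?SS = "{S. S \<subseteq> {1..n} \<and> card S = k}"
  have "finite ?SS"
    by (rule finite_subset[of _ "Pow {1..n}"]) auto
  then have count: "real (num_cliques n (H x) k) = (\<Sum>S\<in>?SS. indicator {x. is_clique (H x) S} x)" for x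
    unfolding num_cliques_def by (simp add: indicator_def sum.If_cases Int_def conj_ac)
  show ?thesis
    unfolding count
    by (subst Bochner_Integration.integral_sum) (auto intro: measure_pmf.integrable_const_bound[where B=1])
qed

lemma prob_gnp_clique_join_le:
  assumes p: "0 < p" "p \<le> 1" and S: "S \<subseteq> {1..n}" and R: "finite R"
  shows "measure_pmf.prob (gnp n p) {G. is_clique (graph_join G R) S}
         \<le> p ^ (card S choose 2) / p ^ card R"
proof -
  define ES where "ES = {e. e \<subseteq> S \<and> card e = 2}"
  have "finite S" using S finite_subset by blast
  then have card_ES: "card ES = card S choose 2" and "finite ES"
    using n_subsets[of S 2] unfolding ES_def by (auto intro: finite_subset[of _ "Pow S"])
  have "card ES \<le> card (ES - R) + card R"
    using card_Un_le[of "ES - R" R] card_mono[of "(ES - R) \<union> R" ES] \<open>finite ES\<close> R by auto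
  then have "p ^ card (ES - R) * p ^ card R \<le> p ^ card ES"
    using p by (simp add: power_decreasing flip: power_add)
  then have powers: "p ^ card (ES - R) \<le> p ^ (card S choose 2) / p ^ card R"
    using p card_ES by (simp add: field_simps)
  have "{G. is_clique (graph_join G R) S} \<subseteq> {G. ES - R \<subseteq> G}"
    using is_clique_edges_subset unfolding ES_def graph_join_def by blast
  then have "measure_pmf.prob (gnp n p) {G. is_clique (graph_join G R) S}
          \<le> measure_pmf.prob (gnp n p) {G. ES - R \<subseteq> G}"
    by (intro measure_pmf.finite_measure_mono) auto
  also have "\<dots> = p ^ card (ES - R)"
    using S p by (intro prob_gnp_superset) (auto simp: ES_def all_edges_def)
  finally show ?thesis using powers by linarith
qed

definition clique_first_moment :: "nat \<Rightarrow> real \<Rightarrow> real \<Rightarrow> nat \<Rightarrow> real" where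
  "clique_first_moment n p m k = real (n choose k) * p ^ (k choose 2) / p powr m"

lemma clique_first_moment_nonneg: "0 \<le> p \<Longrightarrow> 0 \<le> clique_first_moment n p m k"
  unfolding clique_first_moment_def by simp

lemma expectation_num_cliques_join_le:
  assumes p: "0 < p" "p \<le> 1" and R: "R \<subseteq> all_edges n" "real (card R) \<le> m"
  shows "measure_pmf.expectation (gnp n p) (\<lambda>G. real (num_cliques n (graph_join G R) k))
         \<le> clique_first_moment n p m k"
proof -
  let ?SS = "{S. S \<subseteq> {1..n} \<and> card S = k}"
  have "finite R" using R(1) finite_all_edges by (rule finite_subset)
  have "p powr m \<le> p ^ card R"
    using p R(2) by (simp add: powr_mono' flip: powr_realpow)
  then have planted: "p ^ (k choose 2) / p ^ card R \<le> p ^ (k choose 2) / p powr m"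
    using p by (intro divide_left_mono) auto
  have "measure_pmf.expectation (gnp n p) (\<lambda>G. real (num_cliques n (graph_join G R) k))
      = (\<Sum>S\<in>?SS. measure_pmf.prob (gnp n p) {G. is_clique (graph_join G R) S})"
    by (rule expectation_num_cliques)
  also have "\<dots> \<le> (\<Sum>S\<in>?SS. p ^ (k choose 2) / p ^ card R)"
    using prob_gnp_clique_join_le[OF p _ \<open>finite R\<close>] by (intro sum_mono) auto
  also have "\<dots> = real (n choose k) * (p ^ (k choose 2) / p ^ card R)"
    using n_subsets[of "{1..n}" k] by simp
  also have "\<dots> \<le> clique_first_moment n p m k"
    unfolding clique_first_moment_def using mult_left_mono[OF planted, of "real (n choose k)"]
    by simp
  finally show ?thesis .
qed

lemma binomial_le_exp_mult_ln:
  assumes "0 < n"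
  shows "real (n choose k) \<le> exp (real k * ln (real n))"
proof -
  have "n choose k \<le> n ^ k"
    by (cases "k \<le> n") (auto simp: binomial_le_pow binomial_eq_0)
  then have "real (n choose k) \<le> real n ^ k"
    by (metis of_nat_le_iff of_nat_power)
  also have "\<dots> = exp (real k * ln (real n))"
    using assms by (simp add: exp_of_nat_mult)
  finally show ?thesis .
qed

lemma real_choose_two: "real (k choose 2) = real k * (real k - 1) / 2"
proof -
  have "even (k * (k - 1))" by (cases "even k") auto
  then have "real (k choose 2) = real (k * (k - 1)) / 2"
    by (simp add: choose_two real_of_nat_div)
  then show ?thesis by (cases k) (auto simp: algebra_simps)
qed

lemma minus_ln_le_two_mult:
  fixes P :: real
  assumes "1/2 \<le> P" "P \<le> 1"
  shows "- ln P \<le> 2 * (1 - P)"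
proof -
  have "- ln P = ln (1 / P)" using assms by (simp add: ln_div)
  also have "\<dots> \<le> 1 / P - 1" using assms by (intro ln_le_minus_one) auto
  also have "\<dots> = (1 - P) / P" using assms by (simp add: field_simps)
  also have "\<dots> \<le> (1 - P) / (1/2)" using assms by (intro divide_left_mono) auto
  finally show ?thesis by simp
qed

lemma clique_first_moment_le_exp:
  assumes n: "0 < n" and P: "1/2 \<le> P" "P \<le> 1" and m: "0 \<le> m"
  shows "clique_first_moment n P m k
         \<le> exp (real k * ln (real n) - (1 - P) * (real k * (real k - 1) / 2) + 2 * (1 - P) * m)"
proof -
  have P_pos: "0 < P" using P by simp
  have "0 \<le> real k * (real k - 1) / 2" by (cases k) auto
  then have "real k * (real k - 1) / 2 * ln P \<le> real k * (real k - 1) / 2 * - (1 - P)"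
    using ln_le_minus_one[OF P_pos] by (intro mult_left_mono) auto
  then have edges: "real (k choose 2) * ln P \<le> - (1 - P) * (real k * (real k - 1) / 2)"
    by (simp add: real_choose_two algebra_simps)
  have planted: "- (m * ln P) \<le> 2 * (1 - P) * m"
    using mult_left_mono[OF minus_ln_le_two_mult[OF P] m] by (simp add: algebra_simps)
  have "P ^ (k choose 2) = exp (real (k choose 2) * ln P)"
    using P_pos by (simp add: exp_of_nat_mult)
  moreover have "P powr m = exp (m * ln P)"
    using P_pos by (simp add: powr_def)
  ultimately have "P ^ (k choose 2) / P powr m = exp (real (k choose 2) * ln P - m * ln P)"
    by (simp add: exp_diff)
  then have "clique_first_moment n P m k
      = real (n choose k) * exp (real (k choose 2) * ln P - m * ln P)"
    unfolding clique_first_moment_def by (simp flip: times_divide_eq_right)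
  also have "\<dots> \<le> exp (real k * ln (real n)) * exp (real (k choose 2) * ln P - m * ln P)"
    using binomial_le_exp_mult_ln[OF n] by (intro mult_right_mono) auto
  also have "\<dots> = exp (real k * ln (real n) + (real (k choose 2) * ln P - m * ln P))"
    by (simp add: exp_add)
  also have "\<dots> \<le> exp (real k * ln (real n) - (1 - P) * (real k * (real k - 1) / 2) + 2 * (1 - P) * m)"
    by (rule exp_mono) (use edges planted in linarith)
  finally show ?thesis .
qed

lemma two_ln_le_divide_one_minus:
  fixes P :: real
  assumes "1 \<le> n" "0 < P" "P < 1"
  shows "2 * ln (real n) \<le> 2 * ln (real n) / (1 - P)"
proof -
  have "2 * ln (real n) * (1 - P) \<le> 2 * ln (real n)"
    using assms by (intro mult_left_le) auto
  then show ?thesis using assms by (simp add: le_divide_eq)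
qed

lemma clique_exponent_le:
  fixes q L K D k m :: real
  assumes q: "0 < q" "q \<le> 1/2" and L: "0 < L" and K: "q * K = 2 * L"
    and D: "2 \<le> D * L" and k: "K * (1 + D) - 1 \<le> k" and m: "m \<le> D * K\<^sup>2 / 16"
  shows "k * L - q * (k * (k - 1) / 2) + 2 * q * m \<le> - (K * L * D) / 4"
proof -
  have "q * (4 * L) \<le> q * K"
    using q L K by (simp add: mult_right_le_one_le)
  then have K_ge: "4 * L \<le> K" using q by simp
  have D_pos: "0 < D" using D L by (smt (verit) mult_nonpos_nonneg)
  have "4 * (D * L) \<le> K * D"
    using mult_right_mono[OF K_ge, of D] D_pos by (simp add: algebra_simps)
  then have "8 \<le> K * D" using D by linarith
  then have k_ge: "K \<le> k" using k by (simp add: algebra_simps)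
  have "q * (K * (1 + D) - 2) \<le> q * (k - 1)"
    using k q by (intro mult_left_mono) auto
  then have per_vertex: "L - q * (k - 1) / 2 \<le> - (L * D) / 2"
    using K q D by (simp add: algebra_simps)
  have "k * L - q * (k * (k - 1) / 2) = k * (L - q * (k - 1) / 2)"
    by (simp add: algebra_simps)
  also have "\<dots> \<le> k * (- (L * D) / 2)"
    using per_vertex k_ge K_ge L by (intro mult_left_mono) auto
  also have "\<dots> \<le> K * (- (L * D) / 2)"
    using k_ge L D_pos by (intro mult_right_mono_neg) auto
  finally have cliques: "k * L - q * (k * (k - 1) / 2) \<le> - (K * L * D) / 2"
    by simp
  have "2 * q * m \<le> 2 * q * (D * K\<^sup>2 / 16)"
    using m q by (intro mult_left_mono) auto
  also have "\<dots> = K * L * D / 4"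
    using K by (simp add: power2_eq_square algebra_simps)
  finally show ?thesis using cliques by simp
qed

lemma clique_first_moment_threshold_le:
  fixes n :: nat and P K D m :: real
  assumes n: "1 < n" and P: "1/2 \<le> P" "P < 1" and K: "K = 2 * ln (real n) / (1 - P)"
    and m: "0 \<le> m" "m \<le> D * K\<^sup>2 / 16" and D: "2 \<le> D * ln (real n)"
  shows "clique_first_moment n P m (nat \<lfloor>K * (1 + D)\<rfloor>) \<le> exp (- (K * ln (real n) * D) / 4)"
proof -
  define k where "k = nat \<lfloor>K * (1 + D)\<rfloor>"
  have L: "0 < ln (real n)" using n by simp
  then have "0 < D" using D by (smt (verit) mult_nonpos_nonneg)
  moreover have "0 < K" using K L P by simp
  ultimately have "K * (1 + D) - 1 \<le> real k"
    unfolding k_def by linarith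
  moreover have "(1 - P) * K = 2 * ln (real n)" using K P by simp
  ultimately have exponent: "real k * ln (real n) - (1 - P) * (real k * (real k - 1) / 2)
      + 2 * (1 - P) * m \<le> - (K * ln (real n) * D) / 4"
    using P L D m by (intro clique_exponent_le) auto
  have "clique_first_moment n P m k
      \<le> exp (real k * ln (real n) - (1 - P) * (real k * (real k - 1) / 2) + 2 * (1 - P) * m)"
    using n P m by (intro clique_first_moment_le_exp) auto
  also have "\<dots> \<le> exp (- (K * ln (real n) * D) / 4)"
    using exponent by simp
  finally show ?thesis unfolding k_def .
qed

lemma exists_slow_null_sequence:
  fixes s :: "nat \<Rightarrow> real" and c :: real
  assumes "s \<longlonglongrightarrow> 0" and "0 < c"
  shows "\<exists>\<delta>. (\<forall>n. 0 < \<delta> n) \<and> \<delta> \<longlonglongrightarrow> 0 \<and>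
           filterlim (\<lambda>n. \<delta> n * ln (real n)) at_top sequentially \<and>
           (\<forall>\<^sub>F n in sequentially. s n \<le> c * \<delta> n)"
proof -
  define \<delta> where "\<delta> n = sqrt \<bar>s n\<bar> + 1 / sqrt (ln (real n + 2))" for n
  have pos: "0 < \<delta> n" for n
    unfolding \<delta>_def by (simp add: add_nonneg_pos)
  have root_lim: "(\<lambda>n. sqrt \<bar>s n\<bar>) \<longlonglongrightarrow> 0"
    using tendsto_real_sqrt[OF tendsto_rabs[OF assms(1)]] by simp
  have "(\<lambda>n::nat. 1 / sqrt (ln (real n + 2))) \<longlonglongrightarrow> 0" by real_asymp
  from tendsto_add[OF root_lim this] have lim: "\<delta> \<longlonglongrightarrow> 0"
    unfolding \<delta>_def[abs_def] by simp
  have growth: "filterlim (\<lambda>n. \<delta> n * ln (real n)) at_top sequentially"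
  proof (rule filterlim_at_top_mono)
    show "filterlim (\<lambda>n::nat. 1 / sqrt (ln (real n + 2)) * ln (real n)) at_top sequentially"
      by real_asymp
    show "\<forall>\<^sub>F n in sequentially. 1 / sqrt (ln (real n + 2)) * ln (real n) \<le> \<delta> n * ln (real n)"
      using eventually_ge_at_top[of 1]
    proof eventually_elim
      case (elim n)
      have "1 / sqrt (ln (real n + 2)) \<le> \<delta> n" by (simp add: \<delta>_def)
      then show ?case using elim by (intro mult_right_mono) auto
    qed
  qed
  have "\<forall>\<^sub>F n in sequentially. sqrt \<bar>s n\<bar> \<le> c"
    using order_tendstoD(2)[OF root_lim assms(2)] by (auto elim: eventually_mono)
  then have "\<forall>\<^sub>F n in sequentially. s n \<le> c * \<delta> n"
  proof eventually_elim
    case (elim n)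
    have "s n \<le> sqrt \<bar>s n\<bar> * sqrt \<bar>s n\<bar>" by simp
    also have "\<dots> \<le> sqrt \<bar>s n\<bar> * c" using elim by (intro mult_left_mono) auto
    also have "\<dots> \<le> c * \<delta> n" using assms(2) by (simp add: \<delta>_def algebra_simps)
    finally show ?case .
  qed
  with pos lim growth show ?thesis by blast
qed

lemma clique_first_moment_tendsto_zero:
  fixes p r \<delta> K :: "nat \<Rightarrow> real"
  assumes p_range: "\<forall>n. 0 < p n \<and> p n < 1" and p_lim: "p \<longlonglongrightarrow> 1"
    and K_def: "\<forall>n. K n = 2 * ln (real n) / (1 - p n)"
    and r_nonneg: "\<forall>n. 0 \<le> r n"
    and \<delta>_growth: "filterlim (\<lambda>n. \<delta> n * ln (real n)) at_top sequentially"
    and r_le: "\<forall>\<^sub>F n in sequentially. r n \<le> \<delta> n * (K n)\<^sup>2 / 16"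
  shows "(\<lambda>n. clique_first_moment n (p n) (r n) (nat \<lfloor>K n * (1 + \<delta> n)\<rfloor>)) \<longlonglongrightarrow> 0"
proof (rule tendsto_sandwich[of "\<lambda>_. 0" _ _ "\<lambda>n. exp (- (\<delta> n * ln (real n)) / 4)"])
  show "\<forall>\<^sub>F n in sequentially. 0 \<le> clique_first_moment n (p n) (r n) (nat \<lfloor>K n * (1 + \<delta> n)\<rfloor>)"
    using p_range by (intro always_eventually allI clique_first_moment_nonneg) (simp add: less_imp_le)
  have "((\<lambda>x::real. exp (- x / 4)) \<longlongrightarrow> 0) at_top" by real_asymp
  from filterlim_compose[OF this \<delta>_growth]
  show "(\<lambda>n. exp (- (\<delta> n * ln (real n)) / 4)) \<longlonglongrightarrow> 0" by simp
  have "\<forall>\<^sub>F n in sequentially. 1/2 \<le> p n"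
    using order_tendstoD(1)[OF p_lim, of "1/2"] by (auto elim: eventually_mono)
  moreover have "\<forall>\<^sub>F n in sequentially. 2 \<le> \<delta> n * ln (real n)"
    using \<delta>_growth by (simp add: filterlim_at_top)
  ultimately show "\<forall>\<^sub>F n in sequentially.
      clique_first_moment n (p n) (r n) (nat \<lfloor>K n * (1 + \<delta> n)\<rfloor>) \<le> exp (- (\<delta> n * ln (real n)) / 4)"
    using eventually_ge_at_top[of 3] r_le
  proof eventually_elim
    case (elim n)
    have "exp 1 \<le> real n" using exp_le elim(3) by linarith
    then have L: "1 \<le> ln (real n)" using elim(3) by (simp add: ln_ge_iff)
    have "2 * ln (real n) \<le> K n"
      using two_ln_le_divide_one_minus[of n "p n"] K_def p_range elim(3) by auto
    then have K_growth: "\<delta> n * ln (real n) \<le> K n * (\<delta> n * ln (real n))"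
      using L elim(2) by (intro mult_le_cancel_right1[THEN iffD2]) auto
    have "clique_first_moment n (p n) (r n) (nat \<lfloor>K n * (1 + \<delta> n)\<rfloor>)
        \<le> exp (- (K n * ln (real n) * \<delta> n) / 4)"
      using elim r_nonneg p_range K_def by (intro clique_first_moment_threshold_le) auto
    also have "\<dots> \<le> exp (- (\<delta> n * ln (real n)) / 4)"
      using K_growth by (simp add: mult_ac)
    finally show ?case .
  qed
qed (simp)

lemma exists_clique_size_shift:
  fixes p r K :: "nat \<Rightarrow> real"
  assumes p_range: "\<forall>n. 0 < p n \<and> p n < 1" and p_lim: "p \<longlonglongrightarrow> 1"
    and K_def: "\<forall>n. K n = 2 * ln (real n) / (1 - p n)"
    and r_nonneg: "\<forall>n. 0 \<le> r n" and r_small: "r \<in> o(\<lambda>n. (K n)\<^sup>2)"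
  shows "\<exists>\<delta>. (\<forall>n. 0 < \<delta> n) \<and> \<delta> \<longlonglongrightarrow> 0 \<and> filterlim (\<lambda>n. \<delta> n * K n) at_top sequentially \<and>
           (\<lambda>n. clique_first_moment n (p n) (r n) (nat \<lfloor>K n * (1 + \<delta> n)\<rfloor>)) \<longlonglongrightarrow> 0"
proof -
  have "(\<lambda>n. r n / (K n)\<^sup>2) \<longlonglongrightarrow> 0" by (rule smalloD_tendsto[OF r_small])
  moreover have "(0::real) < 1/16" by simp
  ultimately obtain \<delta> where \<delta>_pos: "\<forall>n. 0 < \<delta> n" and \<delta>_lim: "\<delta> \<longlonglongrightarrow> 0"
    and \<delta>_growth: "filterlim (\<lambda>n. \<delta> n * ln (real n)) at_top sequentially"
    and r_le: "\<forall>\<^sub>F n in sequentially. r n / (K n)\<^sup>2 \<le> 1/16 * \<delta> n"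
    using exists_slow_null_sequence by blast
  have K_ge: "ln (real n) \<le> K n" if "1 \<le> n" for n
  proof -
    have "0 \<le> ln (real n)" using that by simp
    moreover have "2 * ln (real n) \<le> K n"
      using two_ln_le_divide_one_minus[OF that, of "p n"] K_def p_range by auto
    ultimately show ?thesis by linarith
  qed
  have \<delta>K_growth: "filterlim (\<lambda>n. \<delta> n * K n) at_top sequentially"
    by (rule filterlim_at_top_mono[OF \<delta>_growth])
      (use \<delta>_pos K_ge in \<open>auto intro: eventually_sequentiallyI[of 1] mult_left_mono less_imp_le\<close>)
  have "\<forall>\<^sub>F n in sequentially. r n \<le> \<delta> n * (K n)\<^sup>2 / 16"
    using r_le eventually_gt_at_top[of 1]
  proof eventually_elim
    case (elim n)
    have "0 < K n" using K_def p_range[rule_format, of n] elim(2) by simp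
    then show ?case using elim(1) by (simp add: divide_le_eq)
  qed
  then have "(\<lambda>n. clique_first_moment n (p n) (r n) (nat \<lfloor>K n * (1 + \<delta> n)\<rfloor>)) \<longlonglongrightarrow> 0"
    by (intro clique_first_moment_tendsto_zero[OF p_range p_lim K_def r_nonneg \<delta>_growth])
  with \<delta>_pos \<delta>_lim \<delta>K_growth show ?thesis by blast
qed

theorem mainTheorem11:
  fixes p r :: "nat \<Rightarrow> real" and K :: "nat \<Rightarrow> real"
  assumes p_range: "\<forall>n. 0 < p n \<and> p n < 1"
    and p_lim: "p \<longlonglongrightarrow> 1"
    and K_def: "\<forall>n. K n = 2 * ln (real n) / (1 - p n)"
    and r_pos: "\<forall>n. r n > 0"
    and r_small: "r \<in> o(\<lambda>n. (K n)^2)"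
  shows "\<exists>\<delta> \<epsilon> :: nat \<Rightarrow> real.
           (\<forall>n. \<delta> n > 0) \<and> (\<forall>n. \<epsilon> n > 0) \<and>
           \<delta> \<longlonglongrightarrow> 0 \<and> \<epsilon> \<longlonglongrightarrow> 0 \<and>
           filterlim (\<lambda>n. \<delta> n * K n) at_top sequentially \<and>
           (\<forall>n R. R \<subseteq> all_edges n \<and> real (card R) \<le> r n \<longrightarrow>
              measure_pmf.expectation (gnp n (p n))
                (\<lambda>G. real (num_cliques n (graph_join G R) (nat \<lfloor>K n * (1 + \<delta> n)\<rfloor>)))
              \<le> \<epsilon> n)"
proof -
  have "\<forall>n. 0 \<le> r n" using r_pos by (simp add: less_imp_le)
  then obtain \<delta> where \<delta>_pos: "\<forall>n. 0 < \<delta> n" and \<delta>_lim: "\<delta> \<longlonglongrightarrow> 0"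
    and \<delta>K_growth: "filterlim (\<lambda>n. \<delta> n * K n) at_top sequentially"
    and moment_lim: "(\<lambda>n. clique_first_moment n (p n) (r n) (nat \<lfloor>K n * (1 + \<delta> n)\<rfloor>)) \<longlonglongrightarrow> 0"
    using exists_clique_size_shift[OF p_range p_lim K_def _ r_small] by blast
  define \<epsilon> where
    "\<epsilon> n = clique_first_moment n (p n) (r n) (nat \<lfloor>K n * (1 + \<delta> n)\<rfloor>) + 1 / (real n + 1)" for n
  have "(\<lambda>n::nat. 1 / (real n + 1)) \<longlonglongrightarrow> 0" by real_asymp
  from tendsto_add[OF moment_lim this] have \<epsilon>_lim: "\<epsilon> \<longlonglongrightarrow> 0"
    unfolding \<epsilon>_def[abs_def] by simp
  have \<epsilon>_pos: "\<forall>n. 0 < \<epsilon> n"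
    using p_range unfolding \<epsilon>_def by (simp add: add_nonneg_pos clique_first_moment_nonneg less_imp_le)
  have "measure_pmf.expectation (gnp n (p n))
          (\<lambda>G. real (num_cliques n (graph_join G R) (nat \<lfloor>K n * (1 + \<delta> n)\<rfloor>))) \<le> \<epsilon> n"
    if "R \<subseteq> all_edges n" "real (card R) \<le> r n" for n R
    using p_range[rule_format, of n] that unfolding \<epsilon>_def
    by (intro order_trans[OF expectation_num_cliques_join_le]) auto
  with \<delta>_pos \<epsilon>_pos \<delta>_lim \<epsilon>_lim \<delta>K_growth show ?thesis by blast
qed

end
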